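(* Let $R$ be a commutative Artinian ring and $M$ a non-zero $R$-module. Let $\sum_{i=1}^n N_i=M=\sum_{j=1}^m K_j$ be two minimal PS-hollow representations of $M$, where $N_i$ is $H_i$-PS-hollow for each $i\in\{1,\dots,n\}$ and $K_j$ is $H'_j$-PS-hollow for each $j\in\{1,\dots,m\}$. Then $n=m$, $\{H_1,\dots,H_n\}=\{H'_1,\dots,H'_n\}$, and $In(N_i)=In(K_j)$ whenever $H_i=H'_j$.
   Context: All rings are commutative with unity. An $R$-submodule $N\leq M$ is PS-hollow iff for every ideal $I\leq R$ and every submodule $L\leq M$: $N\subseteq IM+L$ implies $N\subseteq IM$ or $N\subseteq L$. For a PS-hollow $N\leq M$ put $A_N=\{I\leq R: N\subseteq IM\}$, $H_N$ the set of minimal elements of $A_N$ (w.r.t. inclusion), and $In(N)=\bigcap_{I\in H_N} IM$ ($=M$ if $H_N=\emptyset$). For a set $H$ of ideals, $N$ is $H$-PS-hollow iff $N$ is PS-hollow and $H_N=H$. A minimal PS-hollow representation of $M$ is an expression $M=\sum_{i=1}^n N_i$ with each $N_i$ $H_i$-PS-hollow, such that $In(N_1),\dots,In(N_n)$ are pairwise incomparable and $N_j\not\subseteq\sum_{i\neq j}N_i$ for every $j$. *)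

theory Defs
  imports "HOL-Algebra.Module" "HOL-Algebra.Ideal"
begin

definition artinian :: "'a ring \<Rightarrow> bool" where
  "artinian R \<longleftrightarrow> cring R \<and>
     (\<forall>I :: nat \<Rightarrow> 'a set. (\<forall>k. ideal (I k) R) \<and> (\<forall>k. I (Suc k) \<subseteq> I k)
        \<longrightarrow> (\<exists>k. \<forall>l\<ge>k. I l = I k))"

definition gen_submod :: "'a ring \<Rightarrow> ('a, 'b) module \<Rightarrow> 'b set \<Rightarrow> 'b set" where
  "gen_submod R M S = \<Inter> {L. submodule L R M \<and> S \<subseteq> L}"

definition ideal_mult :: "'a ring \<Rightarrow> ('a, 'b) module \<Rightarrow> 'a set \<Rightarrow> 'b set" where
  "ideal_mult R M I = gen_submod R M {a \<odot>\<^bsub>M\<^esub> x | a x. a \<in> I \<and> x \<in> carrier M}"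

definition submod_sum :: "'a ring \<Rightarrow> ('a, 'b) module \<Rightarrow> 'i set \<Rightarrow> ('i \<Rightarrow> 'b set) \<Rightarrow> 'b set" where
  "submod_sum R M A N = gen_submod R M (\<Union>i\<in>A. N i)"

definition PS_hollow :: "'a ring \<Rightarrow> ('a, 'b) module \<Rightarrow> 'b set \<Rightarrow> bool" where
  "PS_hollow R M N \<longleftrightarrow> submodule N R M \<and>
     (\<forall>I L. ideal I R \<and> submodule L R M \<and> N \<subseteq> gen_submod R M (ideal_mult R M I \<union> L)
        \<longrightarrow> N \<subseteq> ideal_mult R M I \<or> N \<subseteq> L)"

definition A_set :: "'a ring \<Rightarrow> ('a, 'b) module \<Rightarrow> 'b set \<Rightarrow> 'a set set" where
  "A_set R M N = {I. ideal I R \<and> N \<subseteq> ideal_mult R M I}"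

definition H_set :: "'a ring \<Rightarrow> ('a, 'b) module \<Rightarrow> 'b set \<Rightarrow> 'a set set" where
  "H_set R M N = {I \<in> A_set R M N. \<forall>J \<in> A_set R M N. J \<subseteq> I \<longrightarrow> J = I}"

definition In_sub :: "'a ring \<Rightarrow> ('a, 'b) module \<Rightarrow> 'b set \<Rightarrow> 'b set" where
  "In_sub R M N = (if H_set R M N = {} then carrier M
                   else \<Inter> {ideal_mult R M I | I. I \<in> H_set R M N})"

definition H_PS_hollow :: "'a ring \<Rightarrow> ('a, 'b) module \<Rightarrow> 'a set set \<Rightarrow> 'b set \<Rightarrow> bool" where
  "H_PS_hollow R M H N \<longleftrightarrow> PS_hollow R M N \<and> H_set R M N = H"

definition min_PS_rep :: "'a ring \<Rightarrow> ('a, 'b) module \<Rightarrow> nat \<Rightarrow> (nat \<Rightarrow> 'b set)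
    \<Rightarrow> (nat \<Rightarrow> 'a set set) \<Rightarrow> bool" where
  "min_PS_rep R M n N H \<longleftrightarrow>
     carrier M = submod_sum R M {1..n} N \<and>
     (\<forall>i\<in>{1..n}. H_PS_hollow R M (H i) (N i)) \<and>
     (\<forall>i\<in>{1..n}. \<forall>j\<in>{1..n}. i \<noteq> j \<longrightarrow> \<not> In_sub R M (N i) \<subseteq> In_sub R M (N j)) \<and>
     (\<forall>j\<in>{1..n}. \<not> N j \<subseteq> submod_sum R M ({1..n} - {j}) N)"

end

theory Submission imports Defs begin

text \<open>Over an Artinian ring every ideal I with N \<subseteq> IM lies above a minimal one, so In(N)
  is decreasing in the set A(N). Covering a PS-hollow N by a sum of submodules I_j M forces N
  into a single I_j M (the module analogue of prime avoidance). Hence, for each summand N_i of one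
  minimal representation, some summand K_j of the other satisfies A(K_j) \<subseteq> A(N_i), and then some
  N_i' satisfies A(N_i') \<subseteq> A(K_j). This gives In(N_i) \<subseteq> In(N_i'), so i' = i by incomparability,
  and therefore A(N_i) = A(K_j) and H_i = H'_j. Since In(N_i) only depends on H_i, incomparability
  makes i \<mapsto> H_i injective, and counting gives n = m.\<close>

lemma gen_submod_least: "submodule L R M \<Longrightarrow> S \<subseteq> L \<Longrightarrow> gen_submod R M S \<subseteq> L"
  unfolding gen_submod_def by blast

lemma gen_submod_upper: "S \<subseteq> gen_submod R M S"
  unfolding gen_submod_def by blast

lemma gen_submod_mono: "S \<subseteq> T \<Longrightarrow> gen_submod R M S \<subseteq> gen_submod R M T"
  unfolding gen_submod_def by blast

lemma zero_in_gen_submod: "\<zero>\<^bsub>M\<^esub> \<in> gen_submod R M S"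
  unfolding gen_submod_def
  using subgroup.one_closed[OF submodule.axioms(1)] by fastforce

lemma submodule_gen_submod:
  assumes "module R M" "S \<subseteq> carrier M"
  shows "submodule (gen_submod R M S) R M"
proof -
  interpret module R M by fact
  have closed: "x \<in> gen_submod R M S"
    if "\<And>L. submodule L R M \<Longrightarrow> S \<subseteq> L \<Longrightarrow> x \<in> L" for x
    using that unfolding gen_submod_def by blast
  have mem: "x \<in> L" if "x \<in> gen_submod R M S" "submodule L R M" "S \<subseteq> L" for x L
    using that unfolding gen_submod_def by blast
  show ?thesis
  proof (rule submoduleI)
    show "gen_submod R M S \<subseteq> carrier M"
      using gen_submod_least[OF carrier_is_submodule assms(2)] .
  qed (auto intro!: closed zero_in_gen_submod dest: mem submoduleE(3-5))
qed

lemma submodule_zero: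
  assumes "module R M"
  shows "submodule {\<zero>\<^bsub>M\<^esub>} R M"
proof -
  interpret module R M by fact
  show ?thesis by (rule submoduleI) auto
qed

lemma ideal_mult_subset_carrier:
  assumes "module R M" "ideal I R"
  shows "ideal_mult R M I \<subseteq> carrier M"
  unfolding ideal_mult_def
proof (rule gen_submod_least[OF module.carrier_is_submodule[OF assms(1)]])
  show "{a \<odot>\<^bsub>M\<^esub> x |a x. a \<in> I \<and> x \<in> carrier M} \<subseteq> carrier M"
    using ideal.Icarr[OF assms(2)] module.smult_closed[OF assms(1)] by auto
qed

lemma ideal_mult_mono: "J \<subseteq> I \<Longrightarrow> ideal_mult R M J \<subseteq> ideal_mult R M I"
  unfolding ideal_mult_def by (rule gen_submod_mono) blast

lemma PS_hollow_subset_ideal_mult: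
  assumes "module R M" "PS_hollow R M N" "\<not> N \<subseteq> {\<zero>\<^bsub>M\<^esub>}" "finite S"
    and "\<And>j. j \<in> S \<Longrightarrow> ideal (I j) R"
    and "N \<subseteq> gen_submod R M (\<Union>j\<in>S. ideal_mult R M (I j))"
  shows "\<exists>j\<in>S. N \<subseteq> ideal_mult R M (I j)"
  using assms(4-)
proof (induction S rule: finite_induct)
  case empty
  from empty.prems(2) have "N \<subseteq> gen_submod R M {}" by simp
  also have "\<dots> \<subseteq> {\<zero>\<^bsub>M\<^esub>}"
    by (rule gen_submod_least) (simp_all add: submodule_zero[OF assms(1)])
  finally show ?case using assms(3) by blast
next
  case (insert j S)
  let ?U = "\<Union>l\<in>S. ideal_mult R M (I l)"
  have "?U \<subseteq> carrier M"
    using ideal_mult_subset_carrier[OF assms(1)] insert.prems(1) by blast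
  then have L: "submodule (gen_submod R M ?U) R M"
    by (rule submodule_gen_submod[OF assms(1)])
  have "N \<subseteq> gen_submod R M (ideal_mult R M (I j) \<union> ?U)"
    using insert.prems(2) by simp
  also have "\<dots> \<subseteq> gen_submod R M (ideal_mult R M (I j) \<union> gen_submod R M ?U)"
    using gen_submod_upper[of ?U R M] by (intro gen_submod_mono) blast
  finally have "N \<subseteq> ideal_mult R M (I j) \<or> N \<subseteq> gen_submod R M ?U"
    using assms(2) L insert.prems(1) unfolding PS_hollow_def by simp
  then show ?case
    using insert.IH insert.prems(1) by blast
qed

lemma ex_summand_A_set_subset:
  assumes "module R M" "PS_hollow R M N" "\<not> N \<subseteq> {\<zero>\<^bsub>M\<^esub>}" "finite S"
    and "carrier M = submod_sum R M S K"
  shows "\<exists>j\<in>S. A_set R M (K j) \<subseteq> A_set R M N"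
proof (rule ccontr)
  assume "\<not> ?thesis"
  then have "\<forall>j\<in>S. \<exists>I. I \<in> A_set R M (K j) \<and> I \<notin> A_set R M N" by blast
  then obtain I where I: "\<forall>j\<in>S. I j \<in> A_set R M (K j) \<and> I j \<notin> A_set R M N"
    by (rule bchoice[THEN exE])
  then have ideals: "\<And>j. j \<in> S \<Longrightarrow> ideal (I j) R"
    and covers: "\<And>j. j \<in> S \<Longrightarrow> K j \<subseteq> ideal_mult R M (I j)"
    unfolding A_set_def by simp_all
  have "N \<subseteq> carrier M"
    using assms(2) module.submoduleE(1)[OF assms(1)] unfolding PS_hollow_def by blast
  also have "\<dots> \<subseteq> gen_submod R M (\<Union>j\<in>S. ideal_mult R M (I j))"
    unfolding assms(5) submod_sum_def by (intro gen_submod_mono UN_mono covers order_refl)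
  finally have "N \<subseteq> gen_submod R M (\<Union>j\<in>S. ideal_mult R M (I j))" .
  with assms(1-4) ideals have "\<exists>j\<in>S. N \<subseteq> ideal_mult R M (I j)"
    by (rule PS_hollow_subset_ideal_mult)
  then obtain j where j: "j \<in> S" "N \<subseteq> ideal_mult R M (I j)" ..
  then have "I j \<in> A_set R M N"
    unfolding A_set_def using ideals by simp
  with I j(1) show False by simp
qed

lemma artinian_wf_psubset:
  assumes "artinian R"
  shows "wf {(J, I). ideal J R \<and> ideal I R \<and> J \<subset> I}"
  unfolding wf_iff_no_infinite_down_chain
proof
  assume "\<exists>f. \<forall>i. (f (Suc i), f i) \<in> {(J, I). ideal J R \<and> ideal I R \<and> J \<subset> I}"
  then obtain f where "\<forall>k. ideal (f (Suc k)) R \<and> ideal (f k) R \<and> f (Suc k) \<subset> f k"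
    by auto
  then have ideals: "\<forall>k. ideal (f k) R" and strict: "\<And>k. f (Suc k) \<subset> f k"
    by simp_all
  have "\<exists>k. \<forall>l\<ge>k. f l = f k"
    using assms ideals strict unfolding artinian_def by (simp add: less_imp_le)
  then obtain k where "\<forall>l\<ge>k. f l = f k" ..
  then have "f (Suc k) = f k" by (metis le_SucI order_refl)
  with strict[of k] show False by simp
qed

lemma H_set_below:
  assumes "artinian R" "I \<in> A_set R M N"
  shows "\<exists>J\<in>H_set R M N. J \<subseteq> I"
proof -
  let ?Q = "{J \<in> A_set R M N. J \<subseteq> I}"
  obtain J where J: "J \<in> ?Q"
    and min: "\<And>J'. (J', J) \<in> {(J, I). ideal J R \<and> ideal I R \<and> J \<subset> I} \<Longrightarrow> J' \<notin> ?Q"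
    using wfE_min[OF artinian_wf_psubset[OF assms(1)], of I ?Q] assms(2) by blast
  have "J' = J" if "J' \<in> A_set R M N" "J' \<subseteq> J" for J'
    using min[of J'] that J unfolding A_set_def by auto
  with J have "J \<in> H_set R M N"
    unfolding H_set_def by blast
  with J show ?thesis by blast
qed

lemma In_sub_subset_ideal_mult: "I \<in> H_set R M N \<Longrightarrow> In_sub R M N \<subseteq> ideal_mult R M I"
  unfolding In_sub_def by auto

lemma In_sub_subset_carrier:
  assumes "module R M"
  shows "In_sub R M N \<subseteq> carrier M"
proof (cases "H_set R M N = {}")
  case False
  then obtain I where I: "I \<in> H_set R M N" by blast
  then have "ideal I R" unfolding H_set_def A_set_def by simp
  with I show ?thesis
    using In_sub_subset_ideal_mult ideal_mult_subset_carrier[OF assms] by blast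
qed (simp add: In_sub_def)

lemma In_sub_cong: "H_set R M X = H_set R M Y \<Longrightarrow> In_sub R M X = In_sub R M Y"
  unfolding In_sub_def by simp

lemma In_sub_antimono:
  assumes "module R M" "artinian R" "A_set R M N' \<subseteq> A_set R M N"
  shows "In_sub R M N \<subseteq> In_sub R M N'"
proof (cases "H_set R M N' = {}")
  case True
  then show ?thesis using In_sub_subset_carrier[OF assms(1)] by (simp add: In_sub_def)
next
  case False
  have "In_sub R M N \<subseteq> ideal_mult R M I" if "I \<in> H_set R M N'" for I
  proof -
    have "I \<in> A_set R M N" using that assms(3) unfolding H_set_def by blast
    then obtain J where J: "J \<in> H_set R M N" "J \<subseteq> I"
      using H_set_below[OF assms(2)] by blast
    from J(1) have "In_sub R M N \<subseteq> ideal_mult R M J"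
      by (rule In_sub_subset_ideal_mult)
    also from J(2) have "\<dots> \<subseteq> ideal_mult R M I"
      by (rule ideal_mult_mono)
    finally show ?thesis .
  qed
  with False show ?thesis
    unfolding In_sub_def[of R M N'] by (simp add: Setcompr_eq_image le_INF_iff)
qed

lemma min_PS_rep_PS_hollow: "min_PS_rep R M n N H \<Longrightarrow> i \<in> {1..n} \<Longrightarrow> PS_hollow R M (N i)"
  unfolding min_PS_rep_def H_PS_hollow_def by simp

lemma min_PS_rep_H_set: "min_PS_rep R M n N H \<Longrightarrow> i \<in> {1..n} \<Longrightarrow> H_set R M (N i) = H i"
  unfolding min_PS_rep_def H_PS_hollow_def by simp

lemma min_PS_rep_incomparable:
  "min_PS_rep R M n N H \<Longrightarrow> i \<in> {1..n} \<Longrightarrow> j \<in> {1..n} \<Longrightarrow> i \<noteq> j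
    \<Longrightarrow> \<not> In_sub R M (N i) \<subseteq> In_sub R M (N j)"
  unfolding min_PS_rep_def by simp

lemma min_PS_rep_carrier: "min_PS_rep R M n N H \<Longrightarrow> carrier M = submod_sum R M {1..n} N"
  unfolding min_PS_rep_def by simp

lemma min_PS_rep_nonzero:
  assumes "min_PS_rep R M n N H" "i \<in> {1..n}"
  shows "\<not> N i \<subseteq> {\<zero>\<^bsub>M\<^esub>}"
proof
  assume "N i \<subseteq> {\<zero>\<^bsub>M\<^esub>}"
  then have "N i \<subseteq> submod_sum R M ({1..n} - {i}) N"
    unfolding submod_sum_def using zero_in_gen_submod by blast
  with assms show False
    unfolding min_PS_rep_def by simp
qed

lemma min_PS_rep_inj_on:
  assumes "min_PS_rep R M n N H"
  shows "inj_on H {1..n}"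
proof (rule inj_onI)
  fix i j assume ij: "i \<in> {1..n}" "j \<in> {1..n}" "H i = H j"
  then have "In_sub R M (N i) = In_sub R M (N j)"
    using min_PS_rep_H_set[OF assms] In_sub_cong by metis
  then show "i = j" using min_PS_rep_incomparable[OF assms ij(1,2)] by blast
qed

lemma min_PS_rep_image_subset:
  assumes mod: "module R M" and art: "artinian R"
    and N: "min_PS_rep R M n N H" and K: "min_PS_rep R M m K H'"
  shows "H ` {1..n} \<subseteq> H' ` {1..m}"
proof
  fix h assume "h \<in> H ` {1..n}"
  then obtain i where i: "i \<in> {1..n}" "h = H i" by blast
  obtain j where j: "j \<in> {1..m}" "A_set R M (K j) \<subseteq> A_set R M (N i)"
    using ex_summand_A_set_subset[OF mod min_PS_rep_PS_hollow[OF N i(1)]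
        min_PS_rep_nonzero[OF N i(1)] finite_atLeastAtMost min_PS_rep_carrier[OF K]] ..
  obtain i' where i': "i' \<in> {1..n}" "A_set R M (N i') \<subseteq> A_set R M (K j)"
    using ex_summand_A_set_subset[OF mod min_PS_rep_PS_hollow[OF K j(1)]
        min_PS_rep_nonzero[OF K j(1)] finite_atLeastAtMost min_PS_rep_carrier[OF N]] ..
  have "In_sub R M (N i) \<subseteq> In_sub R M (N i')"
    using In_sub_antimono[OF mod art] i'(2) j(2) by blast
  then have "i' = i" using min_PS_rep_incomparable[OF N i(1) i'(1)] by blast
  with i' j have "A_set R M (N i) = A_set R M (K j)" by blast
  then have "H_set R M (N i) = H_set R M (K j)"
    unfolding H_set_def by simp
  then have "h = H' j"
    using i min_PS_rep_H_set[OF N i(1)] min_PS_rep_H_set[OF K j(1)] by simp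
  with j(1) show "h \<in> H' ` {1..m}" by blast
qed

theorem theorem5p9:
  fixes R :: "'a ring" and M :: "('a, 'b) module"
    and n m :: nat and N K :: "nat \<Rightarrow> 'b set" and H H' :: "nat \<Rightarrow> 'a set set"
  assumes "module R M"
    and "artinian R"
    and "carrier M \<noteq> {\<zero>\<^bsub>M\<^esub>}"
    and "min_PS_rep R M n N H"
    and "min_PS_rep R M m K H'"
  shows "n = m \<and> H ` {1..n} = H' ` {1..m} \<and>
         (\<forall>i\<in>{1..n}. \<forall>j\<in>{1..m}. H i = H' j \<longrightarrow> In_sub R M (N i) = In_sub R M (K j))"
proof -
  have img: "H ` {1..n} = H' ` {1..m}"
    using min_PS_rep_image_subset[OF assms(1,2,4,5)] min_PS_rep_image_subset[OF assms(1,2,5,4)]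
    by (rule subset_antisym)
  moreover have "n = m"
    using img card_image[OF min_PS_rep_inj_on[OF assms(4)]]
      card_image[OF min_PS_rep_inj_on[OF assms(5)]] by simp
  moreover have "\<forall>i\<in>{1..n}. \<forall>j\<in>{1..m}. H i = H' j \<longrightarrow> In_sub R M (N i) = In_sub R M (K j)"
    using min_PS_rep_H_set[OF assms(4)] min_PS_rep_H_set[OF assms(5)] In_sub_cong by metis
  ultimately show ?thesis by blast
qed

end
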